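(* Let $C=w_1-\dots-w_m$ be a chain with positive weights and let $C=C_1-\dots-C_{p+1}$ be a decomposition of $C$ (given by $0=i_0<i_1<\dots<i_p<i_{p+1}=m$) into subchains each of which is extremal. If the gluing conditions $$\Delta_j\ge 0\ \text{for all } j \text{ with } i_j \text{ odd},\qquad \Delta_j\le 0\ \text{for all } j\text{ with } i_j\text{ even}$$ hold ($1\le j\le p$), then $L_1(C)=\sum_{j=1}^{p+1}L_1(C_j)=\sum_{j=1}^{p+1}L_\emptyset(C_j)$.
   Context: For a chain $C'=v_1-\dots-v_r$ with $r\ge 2$ edges and positive weights: $L_1(C')=\max\{\sum_{i=1}^r v_ix_i : x\in\mathbb{R}^r,\ x_i^2+x_{i+1}^2\le 1\ \forall\,1\le i\le r-1\}$; $L_\emptyset(C')=\sqrt{(\sum_{i\text{ odd}}v_i)^2+(\sum_{i\text{ even}}v_i)^2}$; $C'$ is extremal if $L_1(C')=L_\emptyset(C')$ (extremality is only defined for chains with at least two edges). The subchains are $C_j=w_{i_{j-1}+1}-\dots-w_{i_j}$. Let $\tilde\Sigma_{\rm odd}(C_j)=\sum\{w_i : i_{j-1}<i\le i_j,\ i\text{ odd}\}$, $\tilde\Sigma_{\rm even}(C_j)=\sum\{w_i : i_{j-1}<i\le i_j,\ i\text{ even}\}$ (parity with respect to the numbering in $C$), and $\Delta_j=\tilde\Sigma_{\rm even}(C_j)\tilde\Sigma_{\rm odd}(C_{j+1})-\tilde\Sigma_{\rm even}(C_{j+1})\tilde\Sigma_{\rm odd}(C_j)$ for $1\le j\le p$.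 *)

theory Defs
  imports Complex_Main
begin

text \<open>A chain with r edges is given by weights v 1, ..., v r (a function nat => real,
  only the values at 1..r matter).\<close>

definition L1 :: "(nat \<Rightarrow> real) \<Rightarrow> nat \<Rightarrow> real" where
  "L1 v r = Sup ((\<lambda>x. \<Sum>k=1..r. v k * x k) `
      {x :: nat \<Rightarrow> real. \<forall>k\<in>{1..<r}. (x k)^2 + (x (Suc k))^2 \<le> 1})"

definition Lempty :: "(nat \<Rightarrow> real) \<Rightarrow> nat \<Rightarrow> real" where
  "Lempty v r = sqrt ((\<Sum>k\<in>{k\<in>{1..r}. odd k}. v k)^2 + (\<Sum>k\<in>{k\<in>{1..r}. even k}. v k)^2)"

definition extremal :: "(nat \<Rightarrow> real) \<Rightarrow> nat \<Rightarrow> bool" where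
  "extremal v r \<longleftrightarrow> r \<ge> 2 \<and> L1 v r = Lempty v r"

definition subchain :: "(nat \<Rightarrow> real) \<Rightarrow> (nat \<Rightarrow> nat) \<Rightarrow> nat \<Rightarrow> (nat \<Rightarrow> real)" where
  "subchain w i j = (\<lambda>k. w (i (j - 1) + k))"

definition sublen :: "(nat \<Rightarrow> nat) \<Rightarrow> nat \<Rightarrow> nat" where
  "sublen i j = i j - i (j - 1)"

text \<open>Parity with respect to the numbering in the whole chain C.\<close>

definition SigOdd :: "(nat \<Rightarrow> real) \<Rightarrow> (nat \<Rightarrow> nat) \<Rightarrow> nat \<Rightarrow> real" where
  "SigOdd w i j = (\<Sum>k\<in>{k\<in>{i (j - 1)<..i j}. odd k}. w k)"

definition SigEven :: "(nat \<Rightarrow> real) \<Rightarrow> (nat \<Rightarrow> nat) \<Rightarrow> nat \<Rightarrow> real" where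
  "SigEven w i j = (\<Sum>k\<in>{k\<in>{i (j - 1)<..i j}. even k}. w k)"

definition Delta :: "(nat \<Rightarrow> real) \<Rightarrow> (nat \<Rightarrow> nat) \<Rightarrow> nat \<Rightarrow> real" where
  "Delta w i j = SigEven w i j * SigOdd w i (j + 1) - SigEven w i (j + 1) * SigOdd w i j"

end

theory Submission
  imports Defs
begin

(* Restricting an admissible vector of C to a block gives an admissible vector of the block,
   so L1(C) <= sum_j L1(C_j) for every decomposition.  Conversely, glue the optimal vectors of
   the blocks: on C_j put x_l = Sigma_odd(C_j) / L_empty(C_j) at odd l and
   Sigma_even(C_j) / L_empty(C_j) at even l.  Its objective on C_j is L_empty(C_j), and the
   constraints inside a block hold with equality.  The constraint at a breakpoint i_j pairs one
   normalised coordinate of C_j with the other-parity coordinate of C_(j+1); for nonnegative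
   a, b, c, d one has a^2/(a^2+b^2) + d^2/(c^2+d^2) <= 1 iff ad <= bc, which is the sign condition
   on Delta_j.  Extremality finally identifies L1(C_j) with L_empty(C_j). *)

definition L1_admissible :: "nat \<Rightarrow> (nat \<Rightarrow> real) \<Rightarrow> bool" where
  "L1_admissible r x \<longleftrightarrow> (\<forall>k\<in>{1..<r}. (x k)^2 + (x (Suc k))^2 \<le> 1)"

lemma L1_eq_Sup_admissible:
  "L1 v r = Sup ((\<lambda>x. \<Sum>k=1..r. v k * x k) ` Collect (L1_admissible r))"
  by (simp add: L1_def L1_admissible_def[abs_def])

lemma L1_admissible_square_le_1:
  assumes "L1_admissible r x" "2 \<le> r" "k \<in> {1..r}"
  shows "(x k)^2 \<le> 1"
proof (cases "k < r")
  case True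
  with assms have "(x k)^2 + (x (Suc k))^2 \<le> 1" by (auto simp: L1_admissible_def)
  then show ?thesis by (smt (verit) zero_le_power2)
next
  case False
  with assms have k: "k = Suc (r - 1)" and "r - 1 \<in> {1..<r}" by auto
  with assms(1) have "(x (r - 1))^2 + (x (Suc (r - 1)))^2 \<le> 1"
    unfolding L1_admissible_def by blast
  with k have "(x (r - 1))^2 + (x k)^2 \<le> 1" by simp
  then show ?thesis by (smt (verit) zero_le_power2)
qed

lemma bdd_above_L1_objective:
  assumes "r \<noteq> 1"
  shows "bdd_above ((\<lambda>x. \<Sum>k=1..r. v k * x k) ` Collect (L1_admissible r))"
proof (rule bdd_aboveI2)
  fix x assume "x \<in> Collect (L1_admissible r)"
  then have "\<bar>x k\<bar> \<le> 1" if "k \<in> {1..r}" for k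
    using L1_admissible_square_le_1[of r x k] that assms by (simp add: abs_square_le_1)
  then have "v k * x k \<le> \<bar>v k\<bar>" if "k \<in> {1..r}" for k
    using that by (metis abs_ge_self abs_ge_zero abs_mult mult_left_le order_trans)
  then show "(\<Sum>k=1..r. v k * x k) \<le> (\<Sum>k=1..r. \<bar>v k\<bar>)" by (rule sum_mono)
qed

(* For r = 1 the single coordinate is unconstrained and L1 is the Sup of an unbounded set. *)
lemma L1_upper:
  assumes "L1_admissible r x" "r \<noteq> 1"
  shows "(\<Sum>k=1..r. v k * x k) \<le> L1 v r"
  unfolding L1_eq_Sup_admissible
  using assms by (intro cSup_upper bdd_above_L1_objective) auto

lemma L1_least:
  assumes "\<And>x. L1_admissible r x \<Longrightarrow> (\<Sum>k=1..r. v k * x k) \<le> z"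
  shows "L1 v r \<le> z"
proof -
  have "L1_admissible r (\<lambda>_. 0)" by (simp add: L1_admissible_def)
  then show ?thesis
    unfolding L1_eq_Sup_admissible using assms by (intro cSup_least) auto
qed

lemma L1_admissible_shift:
  assumes "L1_admissible m x" "a + n \<le> m"
  shows "L1_admissible n (\<lambda>k. x (a + k))"
  using assms by (auto simp: L1_admissible_def)

lemma sum_shift_filtered:
  fixes a n :: nat
  shows "(\<Sum>k\<in>{k\<in>{1..n}. P k}. g (a + k)) = (\<Sum>l\<in>{l\<in>{a<..a+n}. P (l - a)}. g l)"
  by (rule sum.reindex_bij_witness[of _ "\<lambda>l. l - a" "\<lambda>k. a + k"]) auto

lemma sum_shift_interval:
  fixes a n :: nat
  shows "(\<Sum>k=1..n. g (a + k)) = (\<Sum>l\<in>{a<..a+n}. g l)"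
  by (rule sum.reindex_bij_witness[of _ "\<lambda>l. l - a" "\<lambda>k. a + k"]) auto

lemma Lempty_shift:
  fixes a n :: nat
  shows "Lempty (\<lambda>k. w (a + k)) n
     = sqrt ((\<Sum>l\<in>{l\<in>{a<..a+n}. odd l}. w l)^2 + (\<Sum>l\<in>{l\<in>{a<..a+n}. even l}. w l)^2)"
proof -
  have shifted: "Lempty (\<lambda>k. w (a + k)) n
     = sqrt ((\<Sum>l\<in>{l\<in>{a<..a+n}. odd (l - a)}. w l)^2 + (\<Sum>l\<in>{l\<in>{a<..a+n}. even (l - a)}. w l)^2)"
    unfolding Lempty_def sum_shift_filtered[where P=odd] sum_shift_filtered[where P=even] ..
  show ?thesis
  proof (cases "even a")
    case True
    then have "{l\<in>{a<..a+n}. odd (l - a)} = {l\<in>{a<..a+n}. odd l}"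
      "{l\<in>{a<..a+n}. even (l - a)} = {l\<in>{a<..a+n}. even l}" by auto
    then show ?thesis unfolding shifted by simp
  next
    case False
    then have "{l\<in>{a<..a+n}. odd (l - a)} = {l\<in>{a<..a+n}. even l}"
      "{l\<in>{a<..a+n}. even (l - a)} = {l\<in>{a<..a+n}. odd l}" by auto
    then show ?thesis unfolding shifted by (simp add: add.commute)
  qed
qed

lemma Lempty_subchain:
  assumes "i (j - 1) \<le> i j"
  shows "Lempty (subchain w i j) (sublen i j) = sqrt ((SigOdd w i j)^2 + (SigEven w i j)^2)"
  using Lempty_shift[of w "i (j - 1)" "sublen i j"] assms
  by (simp add: subchain_def sublen_def SigOdd_def SigEven_def)

lemma normalised_square_sum_le_1:
  fixes a b :: real
  shows "(a / sqrt (a^2 + b^2))^2 + (b / sqrt (a^2 + b^2))^2 \<le> 1"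
  by (cases "a^2 + b^2 = 0") (simp_all add: power_divide add_divide_distrib[symmetric])

lemma normalised_inner_self:
  fixes a b :: real
  shows "a * (a / sqrt (a^2 + b^2)) + b * (b / sqrt (a^2 + b^2)) = sqrt (a^2 + b^2)"
proof (cases "a^2 + b^2 = 0")
  case False
  then have "sqrt (a^2 + b^2) \<noteq> 0" by simp
  then show ?thesis
    by (simp add: field_simps power2_eq_square[symmetric])
qed simp

lemma normalised_fst_snd_square_sum_le_1:
  fixes a b c d :: real
  assumes "0 \<le> a" "0 \<le> d" "a * d \<le> b * c"
  shows "(a / sqrt (a^2 + b^2))^2 + (d / sqrt (c^2 + d^2))^2 \<le> 1"
proof (cases "a^2 + b^2 = 0 \<or> c^2 + d^2 = 0")
  case True
  have "(a / sqrt (a^2 + b^2))^2 \<le> 1" "(d / sqrt (c^2 + d^2))^2 \<le> 1"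
    using normalised_square_sum_le_1[of a b] normalised_square_sum_le_1[of c d]
    by (smt (verit) zero_le_power2)+
  with True show ?thesis by auto
next
  case False
  then have pos: "0 < a^2 + b^2" "0 < c^2 + d^2" by (simp_all add: add_pos_nonneg order_le_neq_trans)
  have "(a * d)^2 \<le> (b * c)^2" using assms by (intro power_mono) auto
  then have "a^2 * (c^2 + d^2) + d^2 * (a^2 + b^2) \<le> (a^2 + b^2) * (c^2 + d^2)"
    by (simp add: power_mult_distrib algebra_simps)
  moreover have "a^2 / (a^2 + b^2) + d^2 / (c^2 + d^2)
      = (a^2 * (c^2 + d^2) + d^2 * (a^2 + b^2)) / ((a^2 + b^2) * (c^2 + d^2))"
    using pos by (intro add_frac_eq) auto
  ultimately have "a^2 / (a^2 + b^2) + d^2 / (c^2 + d^2) \<le> 1"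
    using pos by simp
  then show ?thesis by (simp add: power_divide)
qed

lemma sum_parity_split:
  fixes w :: "nat \<Rightarrow> real"
  assumes "finite A"
  shows "(\<Sum>l\<in>A. w l * (if odd l then a else b))
    = (\<Sum>l\<in>{l\<in>A. odd l}. w l) * a + (\<Sum>l\<in>{l\<in>A. even l}. w l) * b"
proof -
  have "A \<inter> {l. odd l} = {l\<in>A. odd l}" "A \<inter> - {l. odd l} = {l\<in>A. even l}" by auto
  then show ?thesis
    using sum.If_cases[OF assms, of odd "\<lambda>l. w l * a" "\<lambda>l. w l * b"]
    by (simp add: sum_distrib_right if_distrib)
qed

locale chain_decomposition =
  fixes w :: "nat \<Rightarrow> real" and i :: "nat \<Rightarrow> nat" and p m :: nat
  assumes first_breakpoint: "i 0 = 0" and last_breakpoint: "i (p + 1) = m"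
    and breakpoints_increasing: "\<forall>j\<le>p. i j < i (Suc j)"
begin

lemma breakpoint_mono:
  assumes "j \<le> j'" "j' \<le> p + 1"
  shows "i j \<le> i j'"
  using assms
proof (induction j' rule: dec_induct)
  case (step n)
  then have "i j \<le> i n" and "i n < i (Suc n)" using breakpoints_increasing by auto
  then show ?case by simp
qed simp

lemma block_subset:
  assumes "j \<in> {1..p+1}"
  shows "{i (j - 1)<..i j} \<subseteq> {1..m}"
  using assms breakpoint_mono[of j "p + 1"] last_breakpoint by auto

lemma sum_blocks:
  "(\<Sum>k=1..m. f k) = (\<Sum>j=1..p+1. \<Sum>l\<in>{i (j - 1)<..i j}. f l)"
proof -
  have "q \<le> p + 1 \<Longrightarrow> (\<Sum>k\<in>{0<..i q}. f k) = (\<Sum>j=1..q. \<Sum>l\<in>{i (j - 1)<..i j}. f l)" for q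
  proof (induction q)
    case (Suc q)
    have "{0<..i (Suc q)} = {0<..i q} \<union> {i q<..i (Suc q)}"
      using breakpoint_mono[of q "Suc q"] Suc.prems by auto
    then have "(\<Sum>k\<in>{0<..i (Suc q)}. f k) = (\<Sum>k\<in>{0<..i q}. f k) + (\<Sum>k\<in>{i q<..i (Suc q)}. f k)"
      by (simp add: sum.union_disjoint ivl_disj_int)
    with Suc show ?case by simp
  qed (simp add: first_breakpoint)
  moreover have "{1..m} = {0<..i (p + 1)}" using last_breakpoint by auto
  ultimately show ?thesis by simp
qed

definition block :: "nat \<Rightarrow> nat" where
  "block l = (LEAST j. l \<le> i j)"

lemma block_eq:
  assumes j: "j \<in> {1..p+1}" and l: "l \<in> {i (j - 1)<..i j}"
  shows "block l = j"
  unfolding block_def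
proof (rule Least_equality)
  fix j' assume "l \<le> i j'"
  show "j \<le> j'"
  proof (rule ccontr)
    assume "\<not> j \<le> j'"
    then have "i j' \<le> i (j - 1)" using j by (intro breakpoint_mono) auto
    with l \<open>l \<le> i j'\<close> show False by auto
  qed
qed (use l in simp)

lemma ex_block:
  assumes "l \<in> {1..m}"
  shows "\<exists>j\<in>{1..p+1}. l \<in> {i (j - 1)<..i j}"
proof -
  have "l \<le> i (p + 1)" using assms last_breakpoint by simp
  then have "l \<le> i (block l)" "block l \<le> p + 1"
    unfolding block_def by (auto intro: LeastI Least_le)
  moreover have "block l \<noteq> 0"
    using \<open>l \<le> i (block l)\<close> assms first_breakpoint by (cases "block l") auto
  moreover have "\<not> l \<le> i (block l - 1)"
    unfolding block_def by (rule not_less_Least) (use \<open>block l \<noteq> 0\<close> in \<open>simp add: block_def\<close>)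
  ultimately show ?thesis by (intro bexI[of _ "block l"]) auto
qed

lemma sum_block_shift:
  assumes "j \<in> {1..p+1}"
  shows "(\<Sum>l\<in>{i (j - 1)<..i j}. f l) = (\<Sum>k=1..sublen i j. f (i (j - 1) + k))"
  using sum_shift_interval[of f "i (j - 1)" "sublen i j"] breakpoint_mono[of "j - 1" j] assms
  by (simp add: sublen_def)

lemma L1_le_sum_blocks:
  assumes "\<forall>j\<in>{1..p+1}. sublen i j \<noteq> 1"
  shows "L1 w m \<le> (\<Sum>j=1..p+1. L1 (subchain w i j) (sublen i j))"
proof (rule L1_least)
  fix x assume x: "L1_admissible m x"
  have "(\<Sum>l\<in>{i (j - 1)<..i j}. w l * x l) \<le> L1 (subchain w i j) (sublen i j)"
    if j: "j \<in> {1..p+1}" for j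
  proof -
    have "L1_admissible (sublen i j) (\<lambda>k. x (i (j - 1) + k))"
      using x breakpoint_mono[of "j - 1" j] breakpoint_mono[of j "p + 1"] last_breakpoint j
      by (intro L1_admissible_shift[of m]) (auto simp: sublen_def)
    then have "(\<Sum>k=1..sublen i j. subchain w i j k * x (i (j - 1) + k))
        \<le> L1 (subchain w i j) (sublen i j)"
      using assms j by (intro L1_upper) auto
    then show ?thesis using sum_block_shift[OF j, of "\<lambda>l. w l * x l"] by (simp add: subchain_def)
  qed
  then show "(\<Sum>k=1..m. w k * x k) \<le> (\<Sum>j=1..p+1. L1 (subchain w i j) (sublen i j))"
    unfolding sum_blocks[of "\<lambda>k. w k * x k"] by (rule sum_mono)
qed

definition block_norm :: "nat \<Rightarrow> real" where
  "block_norm j = sqrt ((SigOdd w i j)^2 + (SigEven w i j)^2)"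

definition glued_vector :: "nat \<Rightarrow> real" where
  "glued_vector l =
     (if odd l then SigOdd w i (block l) else SigEven w i (block l)) / block_norm (block l)"

lemma glued_vector_within_block:
  assumes j: "j \<in> {1..p+1}" and k: "k \<in> {i (j - 1)<..<i j}"
  shows "(glued_vector k)^2 + (glued_vector (Suc k))^2 \<le> 1"
proof -
  have "block k = j" "block (Suc k) = j" using j k by (auto intro: block_eq)
  then show ?thesis
    using normalised_square_sum_le_1[of "SigOdd w i j" "SigEven w i j"]
    by (cases "odd k") (simp_all add: glued_vector_def block_norm_def add.commute)
qed

end

locale glued_chain_decomposition = chain_decomposition +
  assumes weights_nonneg: "\<forall>k\<in>{1..m}. 0 \<le> w k"
    and glue_odd: "\<forall>j\<in>{1..p}. odd (i j) \<longrightarrow> Delta w i j \<ge> 0"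
    and glue_even: "\<forall>j\<in>{1..p}. even (i j) \<longrightarrow> Delta w i j \<le> 0"
begin

lemma SigOdd_nonneg:
  assumes "j \<in> {1..p+1}"
  shows "0 \<le> SigOdd w i j"
  unfolding SigOdd_def using block_subset[OF assms] weights_nonneg by (intro sum_nonneg) blast

lemma SigEven_nonneg:
  assumes "j \<in> {1..p+1}"
  shows "0 \<le> SigEven w i j"
  unfolding SigEven_def using block_subset[OF assms] weights_nonneg by (intro sum_nonneg) blast

lemma glued_vector_at_breakpoint:
  assumes j: "j \<in> {1..p}"
  shows "(glued_vector (i j))^2 + (glued_vector (Suc (i j)))^2 \<le> 1"
proof -
  have j': "j \<in> {1..p+1}" "Suc j \<in> {1..p+1}" using j by auto
  have "i (j - 1) < i j" "i j < i (Suc j)"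
    using breakpoints_increasing[rule_format, of "j - 1"] breakpoints_increasing[rule_format, of j] j
    by auto
  then have blocks: "block (i j) = j" "block (Suc (i j)) = Suc j"
    using j' by (auto intro!: block_eq)
  let ?O = "SigOdd w i" and ?E = "SigEven w i"
  have nonneg: "0 \<le> ?O j" "0 \<le> ?E j" "0 \<le> ?O (Suc j)" "0 \<le> ?E (Suc j)"
    using j' SigOdd_nonneg SigEven_nonneg by auto
  show ?thesis
  proof (cases "odd (i j)")
    case True
    then have "?O j * ?E (Suc j) \<le> ?E j * ?O (Suc j)"
      using glue_odd j by (auto simp: Delta_def mult.commute)
    then show ?thesis
      using True nonneg normalised_fst_snd_square_sum_le_1[of "?O j" "?E (Suc j)" "?E j" "?O (Suc j)"]
      by (simp add: glued_vector_def blocks block_norm_def)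
  next
    case False
    then have "?E j * ?O (Suc j) \<le> ?O j * ?E (Suc j)"
      using glue_even j by (auto simp: Delta_def mult.commute)
    then show ?thesis
      using False nonneg normalised_fst_snd_square_sum_le_1[of "?E j" "?O (Suc j)" "?O j" "?E (Suc j)"]
      by (simp add: glued_vector_def blocks block_norm_def add.commute)
  qed
qed

lemma glued_vector_admissible: "L1_admissible m glued_vector"
  unfolding L1_admissible_def
proof
  fix k assume k: "k \<in> {1..<m}"
  then obtain j where j: "j \<in> {1..p+1}" "k \<in> {i (j - 1)<..i j}"
    using ex_block by fastforce
  show "(glued_vector k)^2 + (glued_vector (Suc k))^2 \<le> 1"
  proof (cases "k = i j")
    case True
    with k j have "j \<in> {1..p}" using last_breakpoint by (cases "j = p + 1") auto
    with True show ?thesis by (simp add: glued_vector_at_breakpoint)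
  next
    case False
    with j show ?thesis by (intro glued_vector_within_block) auto
  qed
qed

lemma sum_glued_vector: "(\<Sum>k=1..m. w k * glued_vector k) = (\<Sum>j=1..p+1. block_norm j)"
  unfolding sum_blocks[of "\<lambda>k. w k * glued_vector k"]
proof (rule sum.cong)
  fix j assume j: "j \<in> {1..p+1}"
  let ?B = "{i (j - 1)<..i j}" and ?N = "block_norm j"
  have "(\<Sum>l\<in>?B. w l * glued_vector l)
      = (\<Sum>l\<in>?B. w l * (if odd l then SigOdd w i j / ?N else SigEven w i j / ?N))"
    using j by (intro sum.cong) (simp_all add: glued_vector_def block_eq)
  also have "\<dots> = SigOdd w i j * (SigOdd w i j / ?N) + SigEven w i j * (SigEven w i j / ?N)"
    unfolding sum_parity_split[OF finite_greaterThanAtMost] SigOdd_def SigEven_def ..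
  also have "\<dots> = ?N"
    unfolding block_norm_def by (rule normalised_inner_self)
  finally show "(\<Sum>l\<in>?B. w l * glued_vector l) = ?N" .
qed simp

lemma sum_block_norm_le_L1:
  assumes "m \<noteq> 1"
  shows "(\<Sum>j=1..p+1. block_norm j) \<le> L1 w m"
  using L1_upper[OF glued_vector_admissible assms, of w] unfolding sum_glued_vector .

end

theorem mainTheorem10:
  fixes w :: "nat \<Rightarrow> real" and m p :: nat and i :: "nat \<Rightarrow> nat"
  assumes pos: "\<forall>k\<in>{1..m}. w k > 0"
    and i0: "i 0 = 0" and iend: "i (p + 1) = m"
    and incr: "\<forall>j\<le>p. i j < i (Suc j)"
    and ext: "\<forall>j\<in>{1..p+1}. extremal (subchain w i j) (sublen i j)"
    and glue_odd: "\<forall>j\<in>{1..p}. odd (i j) \<longrightarrow> Delta w i j \<ge> 0"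
    and glue_even: "\<forall>j\<in>{1..p}. even (i j) \<longrightarrow> Delta w i j \<le> 0"
  shows "L1 w m = (\<Sum>j=1..p+1. L1 (subchain w i j) (sublen i j))
       \<and> (\<Sum>j=1..p+1. L1 (subchain w i j) (sublen i j))
           = (\<Sum>j=1..p+1. Lempty (subchain w i j) (sublen i j))"
proof -
  interpret glued_chain_decomposition w i p m
    using pos i0 iend incr glue_odd glue_even by unfold_locales (auto simp: less_imp_le)
  have long_blocks: "\<forall>j\<in>{1..p+1}. 2 \<le> sublen i j"
    using ext by (simp add: extremal_def)
  have Lempty_block: "Lempty (subchain w i j) (sublen i j) = block_norm j" if "j \<in> {1..p+1}" for j
    using that breakpoint_mono[of "j - 1" j] by (simp add: Lempty_subchain block_norm_def)
  have L1_block: "L1 (subchain w i j) (sublen i j) = block_norm j" if "j \<in> {1..p+1}" for j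
    using that ext Lempty_block[OF that] by (simp add: extremal_def)
  have "m \<noteq> 1"
    using bspec[OF long_blocks, of 1] breakpoint_mono[of 1 "p + 1"] i0 iend by (simp add: sublen_def)
  then have "(\<Sum>j=1..p+1. block_norm j) \<le> L1 w m"
    by (rule sum_block_norm_le_L1)
  moreover have "L1 w m \<le> (\<Sum>j=1..p+1. L1 (subchain w i j) (sublen i j))"
    using long_blocks by (intro L1_le_sum_blocks) auto
  moreover have "(\<Sum>j=1..p+1. L1 (subchain w i j) (sublen i j)) = (\<Sum>j=1..p+1. block_norm j)"
    "(\<Sum>j=1..p+1. Lempty (subchain w i j) (sublen i j)) = (\<Sum>j=1..p+1. block_norm j)"
    using L1_block Lempty_block by (auto intro: sum.cong)
  ultimately show ?thesis by linarith
qed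

end
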